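(* Let $\mu$ be a partition of $n+k$ with $h$ rows and $l=\mu_1$ columns, and let $(i,j)$ be a cell of $\mu$. Let $\alpha_0,\dots,\alpha_{h-1}$ be distinct rational numbers and $\beta_0,\dots,\beta_{l-1}$ be distinct rational numbers. Let $\mathcal{T}$ be the set of fillings of the Ferrers diagram of $\mu$ in which $k$ cells of $S_\mu(i,j)$ are left white and the other $n$ cells contain the numbers $1,\dots,n$, each exactly once. To $T\in\mathcal{T}$ associate the point $(a(T),b(T))\in\mathbb{Q}^{2n}$ with $a_t(T)=\alpha_{r_t}$ and $b_t(T)=\beta_{c_t}$, where $(r_t,c_t)$ is the cell (row, column) containing $t$. Let $\rho^k$ be the set of these points, and $J_{\rho^k}\subseteq\mathbb{Q}[X_n,Y_n]$ the ideal of polynomials vanishing on $\rho^k$. Let $I^k=\mathrm{gr}\,J_{\rho^k}$ be the ideal generated by the highest-degree homogeneous components of elements of $J_{\rho^k}$. Then $$I^k\subseteq \bigcap_{(a_1,b_1),\dots,(a_k,b_k)} I_{\partial x_{n+1}^{a_1}\partial y_{n+1}^{b_1}\cdots\partial x_{n+k}^{a_k}\partial y_{n+k}^{b_k}\Delta_\mu}\ \cap\ \mathbb{Q}[X_n,Y_n],$$ where the intersection runs over all $k$-tuples of distinct cells of $S_\mu(i,j)$ in increasing order, and $\Delta_\mu=\Delta_\mu(X_{n+k},Y_{n+k})$.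
   Context: Write $X_m=(x_1,\dots,x_m)$ and $Y_m=(y_1,\dots,y_m)$. The Ferrers diagram of $\mu$ is $\{(a,b):0\le a\le h-1,\ 0\le b\le\mu_{a+1}-1\}$ ($a$ = row, $b$ = column). Cells are ordered by $(p,q)<(p',q')$ iff $q<q'$, or $q=q'$ and $p<p'$. For a lattice diagram with cells $(p_1,q_1)<\dots<(p_m,q_m)$, set $\Delta_L=\det(x_r^{p_t}y_r^{q_t})_{1\le r,t\le m}$. The shadow is $S_\mu(i,j)=\{(a,b)\in\mu:a\ge i,\ b\ge j\}$. For $R\in\mathbb{Q}[X_{n+k},Y_{n+k}]$, $I_R$ is the set of $P$ such that $P(\partial)Q=0$ for all partial derivatives $Q$ of $R$, where $P(\partial)$ substitutes $\partial/\partial x_r$ and $\partial/\partial y_r$ for $x_r$ and $y_r$. *)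

theory Defs
  imports Complex_Main "HOL-Library.Poly_Mapping" "HOL-Combinatorics.Permutations"
begin

datatype pvar = X nat | Y nat

type_synonym mon = "pvar \<Rightarrow>\<^sub>0 nat"
type_synonym qpoly = "(pvar \<Rightarrow>\<^sub>0 nat) \<Rightarrow>\<^sub>0 rat"

definition monom :: "mon \<Rightarrow> qpoly" where
  "monom m = Poly_Mapping.single m 1"

definition const :: "rat \<Rightarrow> qpoly" where
  "const c = Poly_Mapping.single 0 c"

definition in_QXY :: "nat \<Rightarrow> qpoly \<Rightarrow> bool" where
  "in_QXY n p \<longleftrightarrow> (\<forall>m::mon. m \<in> Poly_Mapping.keys p \<longrightarrow> (\<forall>v::pvar. v \<in> Poly_Mapping.keys m \<longrightarrow> (\<exists>t. 1 \<le> t \<and> t \<le> n \<and> (v = X t \<or> v = Y t))))"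

definition eval :: "qpoly \<Rightarrow> (pvar \<Rightarrow> rat) \<Rightarrow> rat" where
  "eval p pt = (\<Sum>m\<in>Poly_Mapping.keys p. Poly_Mapping.lookup p m * (\<Prod>v\<in>Poly_Mapping.keys m. pt v ^ Poly_Mapping.lookup m v))"

definition mdeg :: "mon \<Rightarrow> nat" where
  "mdeg m = (\<Sum>v\<in>Poly_Mapping.keys m. Poly_Mapping.lookup m v)"

definition totdeg :: "qpoly \<Rightarrow> nat" where
  "totdeg p = Max (mdeg ` Poly_Mapping.keys p)"

definition top_form :: "qpoly \<Rightarrow> qpoly" where
  "top_form p = Abs_poly_mapping (\<lambda>m. if mdeg m = totdeg p then Poly_Mapping.lookup p m else 0)"

definition ideal_gen :: "qpoly set \<Rightarrow> qpoly set \<Rightarrow> qpoly set" where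
  "ideal_gen S G = {p. \<exists>F c. finite F \<and> F \<subseteq> G \<and> (\<forall>g\<in>F. c g \<in> S) \<and> p = (\<Sum>g\<in>F. c g * g)}"

text \<open>the partial derivative operator corresponding to the monomial m, applied to Q:
  d^m (x^(m'+m)) = prod_v (m'_v + m_v)!/m'_v! x^m'\<close>
definition diff_mono :: "mon \<Rightarrow> qpoly \<Rightarrow> qpoly" where
  "diff_mono m Q = Abs_poly_mapping (\<lambda>m'.
     (\<Prod>v\<in>Poly_Mapping.keys m. (fact (Poly_Mapping.lookup m' v + Poly_Mapping.lookup m v) :: rat) / fact (Poly_Mapping.lookup m' v)) * Poly_Mapping.lookup Q (m' + m))"

definition apply_op :: "qpoly \<Rightarrow> qpoly \<Rightarrow> qpoly" where
  "apply_op P Q = (\<Sum>m\<in>Poly_Mapping.keys P. const (Poly_Mapping.lookup P m) * diff_mono m Q)"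

definition I_of :: "qpoly \<Rightarrow> qpoly set" where
  "I_of R = {P. \<forall>m. apply_op P (diff_mono m R) = 0}"

definition is_partition :: "nat list \<Rightarrow> nat \<Rightarrow> bool" where
  "is_partition mu N \<longleftrightarrow> sorted_wrt (\<ge>) mu \<and> (\<forall>p\<in>set mu. p > 0) \<and> sum_list mu = N"

text \<open>Ferrers diagram: cells (a,b), a = row, b = column\<close>
definition ferrers :: "nat list \<Rightarrow> (nat \<times> nat) set" where
  "ferrers mu = {(a, b). a < length mu \<and> b < mu ! a}"

definition shadow :: "nat list \<Rightarrow> nat \<Rightarrow> nat \<Rightarrow> (nat \<times> nat) set" where
  "shadow mu i j = {(a, b). (a, b) \<in> ferrers mu \<and> a \<ge> i \<and> b \<ge> j}"

definition cell_less :: "nat \<times> nat \<Rightarrow> nat \<times> nat \<Rightarrow> bool" where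
  "cell_less c c' \<longleftrightarrow> snd c < snd c' \<or> (snd c = snd c' \<and> fst c < fst c')"

definition cells_sorted :: "(nat \<times> nat) set \<Rightarrow> (nat \<times> nat) list" where
  "cells_sorted L = (THE cs. sorted_wrt cell_less cs \<and> set cs = L)"

text \<open>Delta_L = det (x_r^{p_t} y_r^{q_t})_{1 \<le> r,t \<le> m}, written by the Leibniz formula\<close>
definition Delta :: "(nat \<times> nat) set \<Rightarrow> qpoly" where
  "Delta L = (let cs = cells_sorted L; m = length cs in
     (\<Sum>\<sigma> | \<sigma> permutes {1..m}. const (of_int (sign \<sigma>)) *
        (\<Prod>r\<in>{1..m}. monom (Poly_Mapping.single (X r) (fst (cs ! (\<sigma> r - 1)))
                             + Poly_Mapping.single (Y r) (snd (cs ! (\<sigma> r - 1)))))))"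

text \<open>a filling: a set W of k white cells in the shadow, and a bijection f from {1..n}
  onto the remaining cells (f t = cell containing t)\<close>
definition fillings :: "nat list \<Rightarrow> nat \<Rightarrow> nat \<Rightarrow> nat \<Rightarrow> nat \<Rightarrow> (nat \<Rightarrow> nat \<times> nat) set" where
  "fillings mu i j n k = {f. \<exists>W. W \<subseteq> shadow mu i j \<and> card W = k \<and>
       bij_betw f {1..n} (ferrers mu - W) \<and> (\<forall>t. t \<notin> {1..n} \<longrightarrow> f t = undefined)}"

text \<open>the point of Q^{2n} attached to a filling, as an assignment x_t := alpha_{r_t}, y_t := beta_{c_t}
  (variables outside x_1..x_n, y_1..y_n are set to 0; only polynomials of Q[X_n,Y_n] are evaluated)\<close>
definition point_of :: "(nat \<Rightarrow> rat) \<Rightarrow> (nat \<Rightarrow> rat) \<Rightarrow> nat \<Rightarrow> (nat \<Rightarrow> nat \<times> nat) \<Rightarrow> pvar \<Rightarrow> rat" where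
  "point_of \<alpha> \<beta> n f v = (case v of
      X t \<Rightarrow> if 1 \<le> t \<and> t \<le> n then \<alpha> (fst (f t)) else 0
    | Y t \<Rightarrow> if 1 \<le> t \<and> t \<le> n then \<beta> (snd (f t)) else 0)"

definition rho :: "nat list \<Rightarrow> nat \<Rightarrow> nat \<Rightarrow> nat \<Rightarrow> nat \<Rightarrow> (nat \<Rightarrow> rat) \<Rightarrow> (nat \<Rightarrow> rat) \<Rightarrow> (pvar \<Rightarrow> rat) set" where
  "rho mu i j n k \<alpha> \<beta> = point_of \<alpha> \<beta> n ` fillings mu i j n k"

definition vanishing_ideal :: "nat \<Rightarrow> (pvar \<Rightarrow> rat) set \<Rightarrow> qpoly set" where
  "vanishing_ideal n R = {p. in_QXY n p \<and> (\<forall>pt\<in>R. eval p pt = 0)}"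

definition gr_ideal :: "nat \<Rightarrow> qpoly set \<Rightarrow> qpoly set" where
  "gr_ideal n J = ideal_gen {p. in_QXY n p} (top_form ` J)"

definition shift_mono :: "nat \<Rightarrow> (nat \<times> nat) list \<Rightarrow> mon" where
  "shift_mono n cs = (\<Sum>s<length cs. Poly_Mapping.single (X (n + s + 1)) (fst (cs ! s))
                                    + Poly_Mapping.single (Y (n + s + 1)) (snd (cs ! s)))"

end

theory Submission
  imports Defs "Jordan_Normal_Form.Determinant" "HOL-Library.Product_Lexorder"
begin

text \<open>Let \<open>\<Phi>\<close> be the alternant \<open>det (exp (\<alpha>\<^sub>p\<^sub>t x\<^sub>r + \<beta>\<^sub>q\<^sub>t y\<^sub>r))\<close> over the cells
  \<open>(p\<^sub>t, q\<^sub>t)\<close> of \<open>\<mu>\<close>: a signed sum of exponentials at the points that the permutations of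
  the cells assign to the variables. Its lowest homogeneous part is a nonzero multiple of
  \<open>\<Delta>\<^sub>\<mu>\<close>, as one sees after a triangular change of columns by divided differences, which turns
  the powers \<open>\<alpha>\<^sub>p\<^sup>a \<beta>\<^sub>q\<^sup>b\<close> into Kronecker deltas in low degree.

  For shadow cells \<open>(a\<^sub>s, b\<^sub>s)\<close> the operator
  \<open>\<Prod>s. \<Prod>p<a\<^sub>s. (\<partial>x\<^sub>n\<^sub>+\<^sub>s - \<alpha>\<^sub>p) * \<Prod>q<b\<^sub>s. (\<partial>y\<^sub>n\<^sub>+\<^sub>s - \<beta>\<^sub>q)\<close> kills every exponential
  whose last \<open>k\<close> points do not come from shadow cells; the surviving ones are, in the first
  \<open>n\<close> coordinates, points of \<open>\<rho>\<^sup>k\<close>. Hence \<open>f(\<partial>)\<close> kills the result whenever \<open>f\<close> vanishes on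
  \<open>\<rho>\<^sup>k\<close>, and in the lowest degree this says that the top form of \<open>f\<close> kills
  \<open>\<partial>x\<^sup>a \<partial>y\<^sup>b \<Delta>\<^sub>\<mu>\<close>. Being killed by \<open>g(\<partial>)\<close> together with all derivatives passes to the
  ideal generated by such \<open>g\<close>.\<close>

section \<open>Polynomial differential operators on coefficient series\<close>

text \<open>A function \<open>F :: mon \<Rightarrow> rat\<close> stands for the formal power series \<open>\<Sum>m. F m * x\<^sup>m\<close>; it
  need not have finite support.\<close>

definition deriv_coeff :: "mon \<Rightarrow> mon \<Rightarrow> rat" where
  "deriv_coeff m u = (\<Prod>v\<in>Poly_Mapping.keys u.
     (fact (Poly_Mapping.lookup m v + Poly_Mapping.lookup u v) :: rat) / fact (Poly_Mapping.lookup m v))"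

definition series_deriv :: "mon \<Rightarrow> (mon \<Rightarrow> rat) \<Rightarrow> mon \<Rightarrow> rat" where
  "series_deriv u F = (\<lambda>m. deriv_coeff m u * F (m + u))"

definition series_op :: "qpoly \<Rightarrow> (mon \<Rightarrow> rat) \<Rightarrow> mon \<Rightarrow> rat" where
  "series_op P F = (\<lambda>m. \<Sum>u\<in>Poly_Mapping.keys P. Poly_Mapping.lookup P u * series_deriv u F m)"

lemma lookup_diff_mono: "Poly_Mapping.lookup (diff_mono u Q) = series_deriv u (Poly_Mapping.lookup Q)"
proof -
  have "finite {m'. deriv_coeff m' u * Poly_Mapping.lookup Q (m' + u) \<noteq> 0}"
  proof (rule finite_subset)
    show "finite ((\<lambda>m'. m' + u) -` Poly_Mapping.keys Q)"
      by (rule finite_vimageI) (auto intro: injI)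
  qed (auto simp: in_keys_iff)
  then show ?thesis
    by (simp add: diff_mono_def series_deriv_def deriv_coeff_def fun_eq_iff)
qed

lemma lookup_const_mult: "Poly_Mapping.lookup (const c * p) m = c * Poly_Mapping.lookup p m"
proof -
  have "const c * p = Poly_Mapping.map ((*) c) p"
    by (simp add: const_def mult_map_scale_conv_mult)
  then show ?thesis by (simp add: Poly_Mapping.map.rep_eq when_def)
qed

lemma lookup_apply_op: "Poly_Mapping.lookup (apply_op P Q) = series_op P (Poly_Mapping.lookup Q)"
  by (simp add: apply_op_def series_op_def fun_eq_iff lookup_sum lookup_const_mult lookup_diff_mono)

lemma deriv_coeff_superset:
  assumes "Poly_Mapping.keys u \<subseteq> S" "finite S"
  shows "deriv_coeff m u = (\<Prod>v\<in>S.
     (fact (Poly_Mapping.lookup m v + Poly_Mapping.lookup u v) :: rat) / fact (Poly_Mapping.lookup m v))"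
  unfolding deriv_coeff_def
  by (rule prod.mono_neutral_left[OF assms(2) assms(1)]) (auto simp: in_keys_iff)

lemma deriv_coeff_add: "deriv_coeff m (a + b) = deriv_coeff m a * deriv_coeff (m + a) b"
proof -
  let ?S = "Poly_Mapping.keys a \<union> Poly_Mapping.keys b"
  have "Poly_Mapping.keys (a + b) \<subseteq> ?S" by (rule keys_add)
  moreover have "Poly_Mapping.keys a \<subseteq> ?S" "Poly_Mapping.keys b \<subseteq> ?S" by auto
  ultimately show ?thesis
    by (simp add: deriv_coeff_superset[of _ ?S] prod.distrib[symmetric] lookup_add add.assoc)
qed

lemma deriv_coeff_zero [simp]: "deriv_coeff m 0 = 1"
  by (simp add: deriv_coeff_def)

lemma series_deriv_series_deriv: "series_deriv a (series_deriv b F) = series_deriv (a + b) F"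
  by (simp add: series_deriv_def fun_eq_iff deriv_coeff_add add.assoc)

lemma series_op_superset:
  assumes "Poly_Mapping.keys P \<subseteq> S" "finite S"
  shows "series_op P F m = (\<Sum>u\<in>S. Poly_Mapping.lookup P u * series_deriv u F m)"
  unfolding series_op_def
  by (rule sum.mono_neutral_left[OF assms(2) assms(1)]) (auto simp: in_keys_iff)

lemma series_op_add: "series_op (P + Q) F m = series_op P F m + series_op Q F m"
proof -
  let ?S = "Poly_Mapping.keys P \<union> Poly_Mapping.keys Q"
  have "Poly_Mapping.keys P \<subseteq> ?S" "Poly_Mapping.keys Q \<subseteq> ?S" by auto
  then show ?thesis
    by (simp add: series_op_superset[OF keys_add] series_op_superset[of _ ?S]
        lookup_add distrib_right sum.distrib)
qed

lemma series_op_sum: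
  "finite I \<Longrightarrow> series_op (\<Sum>i\<in>I. P i) F m = (\<Sum>i\<in>I. series_op (P i) F m)"
  by (induction I rule: finite_induct) (auto simp: series_op_add series_op_def[of 0])

lemma series_op_linear:
  "finite I \<Longrightarrow> series_op P (\<lambda>m. \<Sum>i\<in>I. c i * G i m) m = (\<Sum>i\<in>I. c i * series_op P (G i) m)"
  by (simp add: series_op_def series_deriv_def sum_distrib_left sum_distrib_right mult_ac
      sum.swap[of _ I])

lemma series_op_scale: "series_op P (\<lambda>m. a * G m) m = a * series_op P G m"
  by (simp add: series_op_def series_deriv_def sum_distrib_left mult_ac)

lemma lookup_mult_keys:
  "Poly_Mapping.lookup (f * g) w = (\<Sum>l\<in>Poly_Mapping.keys f. \<Sum>q\<in>Poly_Mapping.keys g.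
     if w = l + q then Poly_Mapping.lookup f l * Poly_Mapping.lookup g q else 0)"
proof -
  have inner: "(\<Sum>q. Poly_Mapping.lookup g q when w = l + q) =
      (\<Sum>q\<in>Poly_Mapping.keys g. if w = l + q then Poly_Mapping.lookup g q else 0)" for l
    by (subst Sum_any.expand_superset[of "Poly_Mapping.keys g"]) (auto simp: when_def in_keys_iff)
  have "Poly_Mapping.lookup (f * g) w = (\<Sum>l. Poly_Mapping.lookup f l *
      (\<Sum>q\<in>Poly_Mapping.keys g. if w = l + q then Poly_Mapping.lookup g q else 0))"
    by (simp add: lookup_mult inner)
  also have "\<dots> = (\<Sum>l\<in>Poly_Mapping.keys f. Poly_Mapping.lookup f l *
      (\<Sum>q\<in>Poly_Mapping.keys g. if w = l + q then Poly_Mapping.lookup g q else 0))"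
    by (subst Sum_any.expand_superset[of "Poly_Mapping.keys f"]) (auto simp: in_keys_iff)
  finally show ?thesis by (simp add: sum_distrib_left if_distrib cong: if_cong)
qed

lemma series_op_mult: "series_op (f * g) F = series_op f (series_op g F)"
proof
  fix m
  let ?K = "(\<lambda>(l, q). l + q) ` (Poly_Mapping.keys f \<times> Poly_Mapping.keys g)"
  let ?c = "\<lambda>l q. Poly_Mapping.lookup f l * Poly_Mapping.lookup g q"
  have K: "finite ?K" by simp
  have "series_op (f * g) F m = (\<Sum>w\<in>?K. Poly_Mapping.lookup (f * g) w * series_deriv w F m)"
    by (rule series_op_superset[OF _ K]) (use keys_mult in fastforce)
  also have "\<dots> = (\<Sum>l\<in>Poly_Mapping.keys f. \<Sum>q\<in>Poly_Mapping.keys g. \<Sum>w\<in>?K.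
      if w = l + q then ?c l q * series_deriv w F m else 0)"
    unfolding lookup_mult_keys sum_distrib_right if_distrib[of "\<lambda>z. z * _"] mult_zero_left
    by (subst sum.swap) (rule sum.cong[OF refl], rule sum.swap)
  also have "\<dots> = (\<Sum>l\<in>Poly_Mapping.keys f. \<Sum>q\<in>Poly_Mapping.keys g. ?c l q * series_deriv (l + q) F m)"
    by (intro sum.cong refl) (auto simp: sum.delta[OF K])
  also have "\<dots> = series_op f (series_op g F) m"
    by (simp add: series_op_def series_deriv_def deriv_coeff_add sum_distrib_left mult_ac add.assoc)
  finally show "series_op (f * g) F m = series_op f (series_op g F) m" .
qed

lemma series_op_monom: "series_op (Defs.monom u) F = series_deriv u F"
  by (simp add: series_op_def Defs.monom_def fun_eq_iff)

lemma series_op_series_deriv_commute: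
  "series_op g (series_deriv u F) = series_deriv u (series_op g F)"
  by (metis series_op_monom series_op_mult mult.commute)

lemma I_of_ideal_gen:
  assumes "\<And>g. g \<in> G \<Longrightarrow> series_op g (Poly_Mapping.lookup R) = (\<lambda>_. 0)"
    and "P \<in> ideal_gen S G"
  shows "P \<in> I_of R"
proof -
  obtain F c where F: "finite F" "F \<subseteq> G" and P: "P = (\<Sum>g\<in>F. c g * g)"
    using assms(2) unfolding ideal_gen_def by blast
  have "series_op (c g * g) (series_deriv m (Poly_Mapping.lookup R)) = (\<lambda>_. 0)" if "g \<in> F" for g m
  proof -
    have "series_op g (Poly_Mapping.lookup R) = (\<lambda>_. 0)" using that F assms(1) by blast
    then show ?thesis
      by (simp add: series_op_mult series_op_series_deriv_commute)
        (simp add: series_op_def series_deriv_def)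
  qed
  then have "apply_op P (diff_mono m R) = 0" for m
    by (intro poly_mapping_eqI) (simp add: lookup_apply_op lookup_diff_mono P series_op_sum F)
  then show ?thesis by (simp add: I_of_def)
qed

section \<open>Top forms and exponential series\<close>

definition qxy_vars :: "nat \<Rightarrow> pvar set" where
  "qxy_vars n = {v. \<exists>t. 1 \<le> t \<and> t \<le> n \<and> (v = X t \<or> v = Y t)}"

lemma in_QXY_iff: "in_QXY n p \<longleftrightarrow> (\<forall>m\<in>Poly_Mapping.keys p. Poly_Mapping.keys m \<subseteq> qxy_vars n)"
  by (auto simp: in_QXY_def qxy_vars_def)

lemma qxy_vars_eq: "qxy_vars n = X ` Suc ` {..<n} \<union> Y ` Suc ` {..<n}"
  by (auto simp: qxy_vars_def image_iff) (metis Suc_pred' lessThan_iff less_Suc_eq_le not_le)+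

lemma finite_qxy_vars: "finite (qxy_vars n)"
  by (simp add: qxy_vars_eq)

lemma sum_qxy_vars: "(\<Sum>v\<in>qxy_vars n. g v) = (\<Sum>i<n. g (X (Suc i)) + g (Y (Suc i)))"
proof -
  have "(\<Sum>v\<in>qxy_vars n. g v) = (\<Sum>v\<in>X ` Suc ` {..<n}. g v) + (\<Sum>v\<in>Y ` Suc ` {..<n}. g v)"
    unfolding qxy_vars_eq by (rule sum.union_disjoint) auto
  then show ?thesis by (simp add: sum.reindex inj_on_def sum.distrib)
qed

lemma prod_qxy_vars: "(\<Prod>v\<in>qxy_vars n. g v) = (\<Prod>i<n. g (X (Suc i)) * g (Y (Suc i)))"
proof -
  have "(\<Prod>v\<in>qxy_vars n. g v) = (\<Prod>v\<in>X ` Suc ` {..<n}. g v) * (\<Prod>v\<in>Y ` Suc ` {..<n}. g v)"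
    unfolding qxy_vars_eq by (rule prod.union_disjoint) auto
  then show ?thesis by (simp add: prod.reindex inj_on_def prod.distrib)
qed

lemma keys_add_mon: "Poly_Mapping.keys ((a::mon) + b) = Poly_Mapping.keys a \<union> Poly_Mapping.keys b"
  by (auto simp: in_keys_iff lookup_add)

lemma in_QXY_add: "in_QXY n p \<Longrightarrow> in_QXY n q \<Longrightarrow> in_QXY n (p + q)"
  unfolding in_QXY_iff using keys_add[of p q] by blast

lemma in_QXY_mult: "in_QXY n p \<Longrightarrow> in_QXY n q \<Longrightarrow> in_QXY n (p * q)"
  unfolding in_QXY_iff using keys_mult[of p q] by (force simp: keys_add_mon)

lemma in_QXY_sum: "finite I \<Longrightarrow> (\<And>i. i \<in> I \<Longrightarrow> in_QXY n (f i)) \<Longrightarrow> in_QXY n (\<Sum>i\<in>I. f i)"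
  by (induction I rule: finite_induct) (auto intro: in_QXY_add simp: in_QXY_def[of _ 0])

lemma lookup_top_form:
  "Poly_Mapping.lookup (top_form p) m = (if mdeg m = totdeg p then Poly_Mapping.lookup p m else 0)"
proof -
  have "finite {m. (if mdeg m = totdeg p then Poly_Mapping.lookup p m else 0) \<noteq> 0}"
    by (rule finite_subset[of _ "Poly_Mapping.keys p"]) (auto simp: in_keys_iff split: if_splits)
  then show ?thesis by (simp add: top_form_def)
qed

lemma keys_top_form: "Poly_Mapping.keys (top_form p) = {m\<in>Poly_Mapping.keys p. mdeg m = totdeg p}"
  by (auto simp: in_keys_iff lookup_top_form split: if_splits)

lemma in_QXY_gr_ideal:
  assumes "P \<in> gr_ideal n J" "\<And>f. f \<in> J \<Longrightarrow> in_QXY n f"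
  shows "in_QXY n P"
proof -
  obtain F c where F: "finite F" "F \<subseteq> top_form ` J" "\<forall>g\<in>F. in_QXY n (c g)"
    and P: "P = (\<Sum>g\<in>F. c g * g)"
    using assms(1) unfolding gr_ideal_def ideal_gen_def by blast
  have "in_QXY n (top_form f)" if "f \<in> J" for f
    using assms(2)[OF that] by (auto simp: in_QXY_iff keys_top_form)
  then show ?thesis
    unfolding P using F by (auto intro!: in_QXY_sum in_QXY_mult)
qed

lemma mdeg_superset:
  "Poly_Mapping.keys m \<subseteq> S \<Longrightarrow> finite S \<Longrightarrow> mdeg m = (\<Sum>v\<in>S. Poly_Mapping.lookup m v)"
  unfolding mdeg_def by (rule sum.mono_neutral_left) (auto simp: in_keys_iff)

lemma mdeg_add: "mdeg (a + b) = mdeg a + mdeg b"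
proof -
  let ?S = "Poly_Mapping.keys a \<union> Poly_Mapping.keys b"
  have "Poly_Mapping.keys a \<subseteq> ?S" "Poly_Mapping.keys b \<subseteq> ?S" "Poly_Mapping.keys (a + b) \<subseteq> ?S"
    by (auto simp: keys_add_mon)
  then show ?thesis by (simp add: mdeg_superset[of _ ?S] lookup_add sum.distrib)
qed

lemma mdeg_single [simp]: "mdeg (Poly_Mapping.single v k) = k"
  by (simp add: mdeg_def)

lemma mdeg_le_totdeg: "u \<in> Poly_Mapping.keys f \<Longrightarrow> mdeg u \<le> totdeg f"
  unfolding totdeg_def by (rule Max_ge) auto

lemma eval_cong:
  assumes "in_QXY n f" "\<And>v. v \<in> qxy_vars n \<Longrightarrow> P v = Q v"
  shows "eval f P = eval f Q"
  unfolding eval_def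
proof (intro sum.cong refl arg_cong2[where f="(*)"] prod.cong)
  fix m v assume "m \<in> Poly_Mapping.keys f" "v \<in> Poly_Mapping.keys m"
  then show "P v ^ Poly_Mapping.lookup m v = Q v ^ Poly_Mapping.lookup m v"
    using assms by (fastforce simp: in_QXY_iff)
qed

text \<open>The coefficient function of \<open>exp (\<Sum>v. P v * v)\<close>.\<close>
definition exp_series :: "(pvar \<Rightarrow> rat) \<Rightarrow> mon \<Rightarrow> rat" where
  "exp_series P m =
     (\<Prod>v\<in>Poly_Mapping.keys m. P v ^ Poly_Mapping.lookup m v / fact (Poly_Mapping.lookup m v))"

lemma exp_series_superset: "Poly_Mapping.keys m \<subseteq> S \<Longrightarrow> finite S \<Longrightarrow>
   exp_series P m = (\<Prod>v\<in>S. P v ^ Poly_Mapping.lookup m v / fact (Poly_Mapping.lookup m v))"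
  unfolding exp_series_def by (rule prod.mono_neutral_left) (auto simp: in_keys_iff)

lemma series_deriv_exp_series:
  "series_deriv u (exp_series P) m = (\<Prod>v\<in>Poly_Mapping.keys u. P v ^ Poly_Mapping.lookup u v) * exp_series P m"
proof -
  let ?S = "Poly_Mapping.keys m \<union> Poly_Mapping.keys u"
  have S: "Poly_Mapping.keys m \<subseteq> ?S" "Poly_Mapping.keys u \<subseteq> ?S" "Poly_Mapping.keys (m + u) \<subseteq> ?S"
    by (auto simp: keys_add_mon)
  have "(\<Prod>v\<in>Poly_Mapping.keys u. P v ^ Poly_Mapping.lookup u v) = (\<Prod>v\<in>?S. P v ^ Poly_Mapping.lookup u v)"
    by (rule prod.mono_neutral_left) (auto simp: in_keys_iff)
  moreover have "(fact (a + b) :: rat) / fact a * (x ^ (a + b) / fact (a + b)) = x ^ b * (x ^ a / fact a)"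
    for a b and x :: rat
    by (simp add: power_add field_simps)
  ultimately show ?thesis
    using S by (simp add: series_deriv_def deriv_coeff_superset[of _ ?S] exp_series_superset[of _ ?S]
        prod.distrib[symmetric] lookup_add)
qed

lemma series_op_exp_series: "series_op f (exp_series P) m = eval f P * exp_series P m"
  by (simp add: series_op_def series_deriv_exp_series eval_def sum_distrib_left mult_ac)

definition var_minus :: "pvar \<Rightarrow> rat \<Rightarrow> qpoly" where
  "var_minus v c = Defs.monom (Poly_Mapping.single v 1) - const c"

lemma single_one_neq_zero: "Poly_Mapping.single v (1::nat) \<noteq> 0"
  by (metis lookup_single_eq lookup_zero one_neq_zero)

lemma lookup_var_minus: "Poly_Mapping.lookup (var_minus v c) u =
    (if u = Poly_Mapping.single v 1 then 1 else if u = 0 then - c else 0)"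
  using single_one_neq_zero[of v]
  by (auto simp: var_minus_def Defs.monom_def const_def lookup_minus lookup_single when_def)

lemma keys_var_minus: "Poly_Mapping.keys (var_minus v c) \<subseteq> {Poly_Mapping.single v 1, 0}"
  by (auto simp: in_keys_iff lookup_var_minus split: if_splits)

lemma series_op_var_minus:
  "series_op (var_minus v c) F m = series_deriv (Poly_Mapping.single v 1) F m - c * F m"
  using single_one_neq_zero[of v]
  by (simp add: series_op_superset[OF keys_var_minus] lookup_var_minus series_deriv_def)

lemma eval_var_minus: "eval (var_minus v c) P = P v - c"
proof -
  have "eval (var_minus v c) P = (\<Sum>m\<in>{Poly_Mapping.single v 1, 0}.
      Poly_Mapping.lookup (var_minus v c) m * (\<Prod>v\<in>Poly_Mapping.keys m. P v ^ Poly_Mapping.lookup m v))"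
    unfolding eval_def
    by (rule sum.mono_neutral_left) (use keys_var_minus in \<open>auto simp: in_keys_iff\<close>)
  then show ?thesis using single_one_neq_zero[of v] by (simp add: lookup_var_minus)
qed

fun lin_ops :: "(pvar \<times> rat) list \<Rightarrow> (mon \<Rightarrow> rat) \<Rightarrow> mon \<Rightarrow> rat" where
  "lin_ops [] F = F"
| "lin_ops ((v, c) # L) F = series_op (var_minus v c) (lin_ops L F)"

definition lin_ops_mon :: "(pvar \<times> rat) list \<Rightarrow> mon" where
  "lin_ops_mon L = (\<Sum>(v, c)\<leftarrow>L. Poly_Mapping.single v 1)"

lemma lin_ops_mon_Nil [simp]: "lin_ops_mon [] = 0"
  and lin_ops_mon_Cons [simp]: "lin_ops_mon ((v, c) # L) = Poly_Mapping.single v 1 + lin_ops_mon L"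
  by (simp_all add: lin_ops_mon_def)

lemma mdeg_lin_ops_mon: "mdeg (lin_ops_mon L) = length L"
  by (induction L) (auto simp: mdeg_add mdeg_def[of 0])

lemma lin_ops_exp_series:
  "lin_ops L (exp_series P) m = (\<Prod>(v, c)\<leftarrow>L. P v - c) * exp_series P m"
proof (induction L arbitrary: m)
  case (Cons a L)
  then have "lin_ops L (exp_series P) = (\<lambda>m. (\<Prod>(v, c)\<leftarrow>L. P v - c) * exp_series P m)"
    by auto
  then show ?case
    by (cases a) (simp add: series_op_scale series_op_exp_series eval_var_minus)
qed simp

lemma lin_ops_linear:
  "finite I \<Longrightarrow> lin_ops L (\<lambda>m. \<Sum>i\<in>I. a i * G i m) m = (\<Sum>i\<in>I. a i * lin_ops L (G i) m)"
proof (induction L arbitrary: m)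
  case (Cons x L)
  then have "lin_ops L (\<lambda>m. \<Sum>i\<in>I. a i * G i m) = (\<lambda>m. \<Sum>i\<in>I. a i * lin_ops L (G i) m)"
    by auto
  with Cons.prems show ?case by (cases x) (simp add: series_op_linear)
qed simp

text \<open>Each factor \<open>\<partial>\<^sub>v - c\<close> lowers degrees by at most one, and only its \<open>\<partial>\<^sub>v\<close> part does so.\<close>
lemma lin_ops_low_degree:
  assumes "\<And>m. mdeg m < K \<Longrightarrow> F m = 0"
  shows "(\<forall>m. mdeg m + length L < K \<longrightarrow> lin_ops L F m = 0) \<and>
         (\<forall>m. mdeg m + length L = K \<longrightarrow> lin_ops L F m = series_deriv (lin_ops_mon L) F m)"
proof (induction L)
  case Nil then show ?case using assms by (simp add: series_deriv_def)
next
  case (Cons x L)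
  obtain v c where x: "x = (v, c)" by force
  let ?e = "Poly_Mapping.single v (1::nat)"
  have step: "lin_ops (x # L) F m = deriv_coeff m ?e * lin_ops L F (m + ?e) - c * lin_ops L F m" for m
    by (simp add: x series_op_var_minus series_deriv_def)
  have deg: "mdeg (m + ?e) = mdeg m + 1" for m by (simp add: mdeg_add)
  show ?case
  proof (intro conjI allI impI)
    fix m assume "mdeg m + length (x # L) < K"
    then show "lin_ops (x # L) F m = 0"
      using Cons.IH deg[of m] by (simp add: step)
  next
    fix m assume "mdeg m + length (x # L) = K"
    then have "lin_ops (x # L) F m = deriv_coeff m ?e * series_deriv (lin_ops_mon L) F (m + ?e)"
      using Cons.IH deg[of m] by (simp add: step)
    also have "\<dots> = series_deriv (lin_ops_mon (x # L)) F m"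
      by (simp add: x series_deriv_series_deriv[symmetric]) (simp add: series_deriv_def)
    finally show "lin_ops (x # L) F m = series_deriv (lin_ops_mon (x # L)) F m" .
  qed
qed

text \<open>In the lowest degree in which \<open>f(\<partial>)\<close> meets \<open>lin_ops L F\<close>, only the top form of \<open>f\<close> and
  the lowest part \<open>c D\<close> of \<open>F\<close> contribute.\<close>
lemma series_op_top_form_kills:
  assumes low: "\<And>m. mdeg m < K \<Longrightarrow> F m = 0"
    and lowest: "\<And>m. mdeg m = K \<Longrightarrow> F m = c * D m" and "c \<noteq> 0"
    and hom: "\<And>m. D m \<noteq> 0 \<Longrightarrow> mdeg m = K"
    and kills: "\<And>m. series_op f (lin_ops L F) m = 0"
  shows "series_op (top_form f) (series_deriv (lin_ops_mon L) D) = (\<lambda>_. 0)"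
proof
  fix m
  let ?u = "lin_ops_mon L" and ?d = "totdeg f" and ?e = "length L"
  let ?R = "series_deriv ?u D" and ?H = "lin_ops L F"
  note H = lin_ops_low_degree[of K F L, OF low]
  have deg_u: "mdeg ?u = ?e" by (rule mdeg_lin_ops_mon)
  have top: "series_op (top_form f) ?R m =
      (\<Sum>u\<in>Poly_Mapping.keys f. Poly_Mapping.lookup (top_form f) u * series_deriv u ?R m)"
    by (rule series_op_superset) (auto simp: keys_top_form)
  show "series_op (top_form f) ?R m = 0"
  proof (cases "mdeg m + ?d + ?e = K")
    case False
    have "?R (m + u) = 0" if "mdeg u = ?d" for u
      using hom[of "m + u + ?u"] False that by (auto simp: series_deriv_def mdeg_add deg_u)
    then show ?thesis
      unfolding top by (intro sum.neutral) (simp add: lookup_top_form series_deriv_def)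
  next
    case True
    have coeff_eq: "Poly_Mapping.lookup f u * series_deriv u ?H m =
        c * (Poly_Mapping.lookup (top_form f) u * series_deriv u ?R m)"
      if u: "u \<in> Poly_Mapping.keys f" for u
    proof (cases "mdeg u = ?d")
      case True
      with \<open>mdeg m + ?d + ?e = K\<close> have "mdeg (m + u) + ?e = K" by (simp add: mdeg_add)
      then have "?H (m + u) = c * ?R (m + u)"
        using H lowest[of "m + u + ?u"] by (simp add: series_deriv_def mdeg_add deg_u)
      then show ?thesis using True by (simp add: series_deriv_def lookup_top_form)
    next
      case False
      then have "mdeg u < ?d" using mdeg_le_totdeg[OF u] by simp
      with \<open>mdeg m + ?d + ?e = K\<close> have "?H (m + u) = 0" using H by (simp add: mdeg_add)
      then show ?thesis using False by (simp add: series_deriv_def lookup_top_form)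
    qed
    have "0 = (\<Sum>u\<in>Poly_Mapping.keys f. Poly_Mapping.lookup f u * series_deriv u ?H m)"
      using kills by (simp add: series_op_def)
    also have "\<dots> = c * series_op (top_form f) ?R m"
      unfolding top sum_distrib_left by (intro sum.cong refl coeff_eq)
    finally show ?thesis using \<open>c \<noteq> 0\<close> by simp
  qed
qed

lemma cell_less_iff_swap_less: "cell_less c c' \<longleftrightarrow> prod.swap c < prod.swap c'"
  by (cases c; cases c') (auto simp: cell_less_def)

lemma distinct_if_sorted_cell_less: "sorted_wrt cell_less cs \<Longrightarrow> distinct cs"
  by (induction cs) (auto simp: cell_less_def)

lemma cells_sorted:
  assumes "finite L"
  shows "sorted_wrt cell_less (cells_sorted L) \<and> set (cells_sorted L) = L"
proof -
  let ?key = "sorted_list_of_set (prod.swap ` L)"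
  have cell_less: "cell_less = (\<lambda>c c'. prod.swap c < prod.swap c')"
    by (simp add: fun_eq_iff cell_less_iff_swap_less)
  have key_sorted: "sorted_wrt (<) ?key"
    by (rule sorted_list_of_set.strict_sorted_key_list_of_set)
  have "\<exists>!cs. sorted_wrt cell_less cs \<and> set cs = L"
  proof
    show "sorted_wrt cell_less (map prod.swap ?key) \<and> set (map prod.swap ?key) = L"
      using assms key_sorted by (simp add: sorted_wrt_map cell_less image_image)
  next
    fix cs assume cs: "sorted_wrt cell_less cs \<and> set cs = L"
    have "map prod.swap cs = ?key"
      by (rule strict_sorted_equal[OF key_sorted])
        (use cs assms in \<open>simp_all add: sorted_wrt_map cell_less\<close>)
    then show "cs = map prod.swap ?key"
      by (metis map_map map_idI comp_apply swap_swap)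
  qed
  then show ?thesis unfolding cells_sorted_def by (rule theI')
qed

text \<open>\<open>divided_diff_power x a p\<close> is the divided difference of \<open>t\<^sup>a\<close> at the nodes \<open>x 0, \<dots>, x p\<close>.\<close>
definition dd_weight :: "(nat \<Rightarrow> 'a::field) \<Rightarrow> nat \<Rightarrow> nat \<Rightarrow> 'a" where
  "dd_weight x i p = 1 / (\<Prod>j\<in>{0..p}-{i}. x i - x j)"

definition divided_diff_power :: "(nat \<Rightarrow> 'a::field) \<Rightarrow> nat \<Rightarrow> nat \<Rightarrow> 'a" where
  "divided_diff_power x a p = (\<Sum>i\<in>{0..p}. x i ^ a * dd_weight x i p)"

text \<open>The Lagrange interpolant \<open>Q\<close> of \<open>t\<^sup>a\<close> at \<open>p + 1\<close> distinct nodes is \<open>t\<^sup>a\<close> itself, and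
  \<open>divided_diff_power x a p\<close> is its coefficient of \<open>t\<^sup>p\<close>.\<close>
lemma divided_diff_power_le:
  fixes x :: "nat \<Rightarrow> 'a::field"
  assumes inj: "inj_on x {0..p}" and "a \<le> p"
  shows "divided_diff_power x a p = (if a = p then 1 else 0)"
proof -
  define D where "D i = (\<Prod>j\<in>{0..p}-{i}. x i - x j)" for i
  define B where "B i = (\<Prod>j\<in>{0..p}-{i}. [:- x j, 1:])" for i
  define Q where "Q = (\<Sum>i\<in>{0..p}. smult (x i ^ a / D i) (B i))"
  have D_nz: "D i \<noteq> 0" if "i \<le> p" for i
    unfolding D_def using inj that by (auto simp: inj_on_def)
  have deg_B: "degree (B i) = p" if "i \<le> p" for i
    using that unfolding B_def by (subst degree_prod_sum_eq) auto
  have coeff_B: "coeff (B i) p = 1" if "i \<le> p" for i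
  proof -
    have "lead_coeff (B i) = 1" unfolding B_def lead_coeff_prod by simp
    then show ?thesis using deg_B[OF that] by simp
  qed
  have poly_B: "poly (B i) (x k) = (if i = k then D i else 0)" if "i \<le> p" "k \<le> p" for i k
  proof (cases "i = k")
    case False
    with that have "k \<in> {0..p}-{i}" by auto
    then have "(\<Prod>j\<in>{0..p}-{i}. poly [:- x j, 1:] (x k)) = 0"
      by (intro prod_zero) (auto intro!: bexI[of _ k])
    with False show ?thesis by (simp add: B_def poly_prod)
  qed (simp add: B_def D_def poly_prod)
  have poly_Q: "poly Q (x k) = x k ^ a" if "k \<le> p" for k
  proof -
    have "poly Q (x k) = (\<Sum>i\<in>{0..p}. if i = k then x i ^ a / D i * D i else 0)"
      unfolding Q_def poly_sum by (intro sum.cong refl) (simp add: poly_B that)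
    then show ?thesis using that D_nz[OF that] by simp
  qed
  have "degree Q \<le> p"
    unfolding Q_def by (rule degree_sum_le) (auto intro: order.trans[OF degree_smult_le] simp: deg_B)
  then have "Q = monom 1 a"
    using poly_Q card_image[OF inj] \<open>a \<le> p\<close>
    by (intro poly_eqI_degree[of "x ` {0..p}"]) (auto simp: poly_monom degree_monom_eq)
  then have "coeff Q p = (if a = p then 1 else 0)"
    by (simp add: coeff_monom)
  moreover have "coeff Q p = divided_diff_power x a p"
    unfolding Q_def coeff_sum divided_diff_power_def dd_weight_def D_def
    by (intro sum.cong refl) (simp add: coeff_B)
  ultimately show ?thesis by simp
qed

lemma divided_diff_power_nonzero_imp_le:
  "inj_on x {0..p} \<Longrightarrow> divided_diff_power x a p \<noteq> 0 \<Longrightarrow> p \<le> a"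
  using divided_diff_power_le[of x p a] by (cases "a \<le> p") (auto split: if_splits)

lemma sum_permutes_bij_betw:
  assumes "bij_betw f A B"
  shows "(\<Sum>\<sigma> | \<sigma> permutes B. h \<sigma>) = (\<Sum>p | p permutes A. h (map_permutation A f p))"
proof -
  have "map_permutation A f p = (\<lambda>x. if x \<in> B then f (p (inv_into A f x)) else x)" for p
    using assms by (auto simp: map_permutation_def restrict_id_def bij_betw_def fun_eq_iff)
  then show ?thesis
    using sum.reindex_bij_betw[OF bij_betw_permutations[OF assms], of h] by simp
qed

lemma leibniz_sum_shift:
  fixes M :: "nat \<Rightarrow> nat \<Rightarrow> 'a::comm_ring_1"
  shows "(\<Sum>\<sigma> | \<sigma> permutes {1..N}. of_int (sign \<sigma>) * (\<Prod>r\<in>{1..N}. M r (\<sigma> r))) =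
     (\<Sum>p | p permutes {0..<N}. of_int (sign p) * (\<Prod>i<N. M (Suc i) (Suc (p i))))"
proof -
  have bij: "bij_betw Suc {0..<N} {1..N}"
    by (simp add: bij_betw_def image_Suc_atLeastLessThan atLeastLessThanSuc_atLeastAtMost)
  have "of_int (sign (map_permutation {0..<N} Suc p)) *
      (\<Prod>r\<in>{1..N}. M r (map_permutation {0..<N} Suc p r)) =
      of_int (sign p) * (\<Prod>i<N. M (Suc i) (Suc (p i)))" if p: "p permutes {0..<N}" for p
  proof -
    have "(\<Prod>r\<in>{1..N}. M r (map_permutation {0..<N} Suc p r)) =
        (\<Prod>i<N. M (Suc i) (map_permutation {0..<N} Suc p (Suc i)))"
      using prod.reindex_bij_betw[OF bij, of "\<lambda>r. M r (map_permutation {0..<N} Suc p r)"]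
      by (simp add: atLeast0LessThan)
    also have "\<dots> = (\<Prod>i<N. M (Suc i) (Suc (p i)))"
      using p by (intro prod.cong refl)
        (auto simp: map_permutation_def restrict_id_def inv_into_f_eq permutes_in_image)
    finally show ?thesis
      using sign_map_permutation[of Suc "{0..<N}" p] p by simp
  qed
  then show ?thesis
    unfolding sum_permutes_bij_betw[OF bij] by (intro sum.cong) auto
qed

section \<open>The alternant of exponentials\<close>

lemma ferrers_eq_Sigma: "ferrers mu = Sigma {0..<length mu} (\<lambda>a. {0..<mu ! a})"
  by (auto simp: ferrers_def)

lemma ferrers_finite: "finite (ferrers mu)"
  by (simp add: ferrers_eq_Sigma)

lemma card_ferrers: "is_partition mu N \<Longrightarrow> card (ferrers mu) = N"
  by (simp add: ferrers_eq_Sigma card_SigmaI sum_list_sum_nth is_partition_def)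

lemma ferrers_down_closed:
  assumes "is_partition mu N" "(p, q) \<in> ferrers mu" "p' \<le> p" "q' \<le> q"
  shows "(p', q') \<in> ferrers mu"
proof -
  have "mu ! p \<le> mu ! p'"
    using assms sorted_wrt_nth_less[of "(\<ge>)" mu p' p]
    by (cases "p' = p") (auto simp: ferrers_def is_partition_def)
  then show ?thesis using assms by (auto simp: ferrers_def)
qed

lemma prod_monom: "finite I \<Longrightarrow> (\<Prod>i\<in>I. Defs.monom (f i)) = Defs.monom (\<Sum>i\<in>I. f i)"
  by (induction I rule: finite_induct) (auto simp: Defs.monom_def mult_single)

lemma prod_indicator:
  "finite S \<Longrightarrow> (\<Prod>r\<in>S. if P r then (1::'a::comm_semiring_1) else 0) = (if \<forall>r\<in>S. P r then 1 else 0)"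
  by (induction S rule: finite_induct) auto

locale ferrers_points =
  fixes mu :: "nat list" and n k :: nat and \<alpha> \<beta> :: "nat \<Rightarrow> rat"
  assumes partition: "is_partition mu (n + k)"
    and inj_\<alpha>: "inj_on \<alpha> {0..<length mu}"
    and inj_\<beta>: "inj_on \<beta> {0..<mu ! 0}"
begin

abbreviation "N \<equiv> n + k"

definition "cells = cells_sorted (ferrers mu)"
definition "cell_row t = fst (cells ! t)"
definition "cell_col t = snd (cells ! t)"

lemma cells_sorted_wrt: "sorted_wrt cell_less cells" and set_cells: "set cells = ferrers mu"
  using cells_sorted[OF ferrers_finite] by (simp_all add: cells_def)

lemma length_cells: "length cells = N"
  using distinct_card[OF distinct_if_sorted_cell_less[OF cells_sorted_wrt]] set_cells
    card_ferrers[OF partition] by simp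

lemma bij_betw_cells: "bij_betw (\<lambda>t. cells ! t) {..<N} (ferrers mu)"
  using distinct_if_sorted_cell_less[OF cells_sorted_wrt] set_cells length_cells
  by (simp add: bij_betw_nth lessThan_atLeast0)

lemma cell_in_ferrers: "t < N \<Longrightarrow> (cell_row t, cell_col t) \<in> ferrers mu"
  using bij_betw_cells by (auto simp: cell_row_def cell_col_def bij_betw_def)

lemma cell_row_bound: "t < N \<Longrightarrow> cell_row t < length mu"
  and cell_col_bound: "t < N \<Longrightarrow> cell_col t < mu ! 0"
  using ferrers_down_closed[OF partition cell_in_ferrers, of t 0 "cell_col t"] cell_in_ferrers[of t]
  by (auto simp: ferrers_def)

lemma sum_cells: "(\<Sum>t<N. h (cells ! t)) = (\<Sum>c\<in>ferrers mu. h c)"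
  using sum.reindex_bij_betw[OF bij_betw_cells] .

lemma bij_betw_perm_index: "\<sigma> permutes {1..N} \<Longrightarrow> bij_betw (\<lambda>r. \<sigma> r - 1) {1..N} {..<N}"
proof -
  assume "\<sigma> permutes {1..N}"
  moreover have "bij_betw (\<lambda>r. r - 1) {1..N} {..<N}"
    by (rule bij_betw_byWitness[of _ Suc]) auto
  ultimately show ?thesis
    using bij_betw_trans[OF permutes_imp_bij] by (simp add: o_def)
qed

definition "xdeg m r = Poly_Mapping.lookup m (X r)"
definition "ydeg m r = Poly_Mapping.lookup m (Y r)"

lemma mdeg_qxy:
  "Poly_Mapping.keys m \<subseteq> qxy_vars N \<Longrightarrow> mdeg m = (\<Sum>i<N. xdeg m (Suc i) + ydeg m (Suc i))"
  by (simp add: mdeg_superset[OF _ finite_qxy_vars] sum_qxy_vars xdeg_def ydeg_def)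

definition delta_mon :: "(nat \<Rightarrow> nat) \<Rightarrow> mon" where
  "delta_mon \<sigma> = (\<Sum>r\<in>{1..N}. Poly_Mapping.single (X r) (cell_row (\<sigma> r - 1))
                             + Poly_Mapping.single (Y r) (cell_col (\<sigma> r - 1)))"

definition "delta_deg = (\<Sum>t<N. cell_row t + cell_col t)"

lemma lookup_Delta: "Poly_Mapping.lookup (Delta (ferrers mu)) m =
    (\<Sum>\<sigma> | \<sigma> permutes {1..N}. of_int (sign \<sigma>) * (if m = delta_mon \<sigma> then 1 else 0))"
  unfolding Delta_def Let_def cells_def[symmetric] length_cells lookup_sum lookup_const_mult
    prod_monom[OF finite_atLeastAtMost]
  unfolding Defs.monom_def lookup_single delta_mon_def cell_row_def cell_col_def
  by (intro sum.cong refl) (auto simp: when_def)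

lemma xdeg_delta_mon: "xdeg (delta_mon \<sigma>) r = (if 1 \<le> r \<and> r \<le> N then cell_row (\<sigma> r - 1) else 0)"
  and ydeg_delta_mon: "ydeg (delta_mon \<sigma>) r = (if 1 \<le> r \<and> r \<le> N then cell_col (\<sigma> r - 1) else 0)"
  by (simp_all add: xdeg_def ydeg_def delta_mon_def lookup_sum lookup_add lookup_single when_def)

lemma keys_delta_mon: "Poly_Mapping.keys (delta_mon \<sigma>) \<subseteq> qxy_vars N"
proof
  fix v assume "v \<in> Poly_Mapping.keys (delta_mon \<sigma>)"
  then show "v \<in> qxy_vars N"
    by (cases v) (auto simp: in_keys_iff qxy_vars_def xdeg_delta_mon[unfolded xdeg_def]
        ydeg_delta_mon[unfolded ydeg_def] split: if_splits)
qed

lemma delta_mon_eq_iff: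
  assumes "Poly_Mapping.keys m \<subseteq> qxy_vars N"
  shows "m = delta_mon \<sigma> \<longleftrightarrow>
    (\<forall>r\<in>{1..N}. xdeg m r = cell_row (\<sigma> r - 1) \<and> ydeg m r = cell_col (\<sigma> r - 1))"
proof
  assume "\<forall>r\<in>{1..N}. xdeg m r = cell_row (\<sigma> r - 1) \<and> ydeg m r = cell_col (\<sigma> r - 1)"
  then have "Poly_Mapping.lookup m v = Poly_Mapping.lookup (delta_mon \<sigma>) v" if "v \<in> qxy_vars N" for v
    using that by (auto simp: qxy_vars_def xdeg_delta_mon[unfolded xdeg_def]
        ydeg_delta_mon[unfolded ydeg_def] xdeg_def ydeg_def)
  moreover have "Poly_Mapping.lookup m v = Poly_Mapping.lookup (delta_mon \<sigma>) v" if "v \<notin> qxy_vars N" for v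
    using that assms keys_delta_mon[of \<sigma>] by (metis in_keys_iff subsetD)
  ultimately show "m = delta_mon \<sigma>" by (blast intro: poly_mapping_eqI)
qed (simp add: xdeg_delta_mon ydeg_delta_mon)

lemma mdeg_delta_mon: "\<sigma> permutes {1..N} \<Longrightarrow> mdeg (delta_mon \<sigma>) = delta_deg"
  using mdeg_qxy[OF keys_delta_mon] sum.reindex_bij_betw[OF bij_betw_perm_index, of \<sigma> "\<lambda>t. cell_row t + cell_col t"]
  by (simp add: xdeg_delta_mon ydeg_delta_mon delta_deg_def sum.atLeast1_atMost_eq)

lemma Delta_coeff_nonzero_imp:
  "Poly_Mapping.lookup (Delta (ferrers mu)) m \<noteq> 0 \<Longrightarrow> \<exists>\<sigma>. \<sigma> permutes {1..N} \<and> m = delta_mon \<sigma>"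
  unfolding lookup_Delta by (auto elim!: sum.not_neutral_contains_not_neutral split: if_splits)

lemma mdeg_Delta_coeff:
  "Poly_Mapping.lookup (Delta (ferrers mu)) m \<noteq> 0 \<Longrightarrow> mdeg m = delta_deg"
  using Delta_coeff_nonzero_imp mdeg_delta_mon by blast

lemma lookup_Delta_qxy:
  assumes "Poly_Mapping.keys m \<subseteq> qxy_vars N"
  shows "Poly_Mapping.lookup (Delta (ferrers mu)) m = (\<Sum>p | p permutes {0..<N}. of_int (sign p) *
    (if \<forall>i<N. xdeg m (Suc i) = cell_row (p i) \<and> ydeg m (Suc i) = cell_col (p i) then 1 else 0))"
proof -
  define M where "M r t = (if xdeg m r = cell_row (t - 1) \<and> ydeg m r = cell_col (t - 1)
    then 1 else (0::rat))" for r t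
  have "Poly_Mapping.lookup (Delta (ferrers mu)) m =
      (\<Sum>\<sigma> | \<sigma> permutes {1..N}. of_int (sign \<sigma>) * (\<Prod>r\<in>{1..N}. M r (\<sigma> r)))"
    unfolding lookup_Delta delta_mon_eq_iff[OF assms] M_def by (simp add: prod_indicator)
  also have "\<dots> = (\<Sum>p | p permutes {0..<N}. of_int (sign p) * (\<Prod>i<N. M (Suc i) (Suc (p i))))"
    by (rule leibniz_sum_shift)
  also have "\<dots> = (\<Sum>p | p permutes {0..<N}. of_int (sign p) *
    (if \<forall>i<N. xdeg m (Suc i) = cell_row (p i) \<and> ydeg m (Suc i) = cell_col (p i) then 1 else 0))"
    by (simp add: M_def prod_indicator Ball_def)
  finally show ?thesis .
qed

definition perm_point :: "(nat \<Rightarrow> nat) \<Rightarrow> pvar \<Rightarrow> rat" where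
  "perm_point \<sigma> v = (case v of
      X r \<Rightarrow> if 1 \<le> r \<and> r \<le> N then \<alpha> (cell_row (\<sigma> r - 1)) else 0
    | Y r \<Rightarrow> if 1 \<le> r \<and> r \<le> N then \<beta> (cell_col (\<sigma> r - 1)) else 0)"

text \<open>\<open>alt_exp\<close> is the series of \<open>\<Delta>\<^sub>\<mu>\<close> with each monomial \<open>x\<^sup>p y\<^sup>q\<close> replaced by
  \<open>exp (\<alpha>\<^sub>p x + \<beta>\<^sub>q y)\<close>.\<close>
definition alt_exp :: "mon \<Rightarrow> rat" where
  "alt_exp m = (\<Sum>\<sigma> | \<sigma> permutes {1..N}. of_int (sign \<sigma>) * exp_series (perm_point \<sigma>) m)"

lemma alt_exp_outside_qxy:
  assumes "\<not> Poly_Mapping.keys m \<subseteq> qxy_vars N"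
  shows "alt_exp m = 0"
proof -
  obtain v where v: "v \<in> Poly_Mapping.keys m" "v \<notin> qxy_vars N" using assms by blast
  then have "perm_point \<sigma> v = 0" for \<sigma> by (cases v) (auto simp: perm_point_def qxy_vars_def)
  then have "exp_series (perm_point \<sigma>) m = 0" for \<sigma>
    using v(1) unfolding exp_series_def by (intro prod_zero bexI[of _ v]) (auto simp: in_keys_iff)
  then show ?thesis by (simp add: alt_exp_def)
qed

definition "fact_weight m = (\<Prod>i<N. 1 / (fact (xdeg m (Suc i)) * fact (ydeg m (Suc i))) :: rat)"

definition "power_mat m = mat N N (\<lambda>(i, j).
    \<alpha> (cell_row j) ^ xdeg m (Suc i) * \<beta> (cell_col j) ^ ydeg m (Suc i))"

lemma alt_exp_qxy:
  assumes "Poly_Mapping.keys m \<subseteq> qxy_vars N"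
  shows "alt_exp m = fact_weight m * det (power_mat m)"
proof -
  define M where "M r t = \<alpha> (cell_row (t - 1)) ^ xdeg m r * \<beta> (cell_col (t - 1)) ^ ydeg m r" for r t
  have "exp_series (perm_point \<sigma>) m = fact_weight m * (\<Prod>r\<in>{1..N}. M r (\<sigma> r))" for \<sigma>
    unfolding exp_series_superset[OF assms finite_qxy_vars] prod_qxy_vars fact_weight_def M_def
      One_nat_def prod.atLeast1_atMost_eq prod.distrib[symmetric]
    by (intro prod.cong refl) (simp add: perm_point_def xdeg_def ydeg_def)
  then have "alt_exp m = fact_weight m *
      (\<Sum>\<sigma> | \<sigma> permutes {1..N}. of_int (sign \<sigma>) * (\<Prod>r\<in>{1..N}. M r (\<sigma> r)))"
    by (simp add: alt_exp_def sum_distrib_left mult_ac)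
  also have "\<dots> = fact_weight m * det (power_mat m)"
  proof -
    have "det (power_mat m) = (\<Sum>p | p permutes {0..<N}. signof p * (\<Prod>i = 0..<N. power_mat m $$ (i, p i)))"
      by (rule det_def') (simp add: power_mat_def)
    moreover have "(\<Prod>i<N. power_mat m $$ (i, p i)) = (\<Prod>i<N. M (Suc i) (Suc (p i)))"
      if "p permutes {0..<N}" for p
      using that by (intro prod.cong refl) (simp add: power_mat_def M_def permutes_in_image)
    ultimately show ?thesis
      unfolding leibniz_sum_shift by (simp add: atLeast0LessThan)
  qed
  finally show ?thesis .
qed

lemma inj_\<alpha>_upto: "p < length mu \<Longrightarrow> inj_on \<alpha> {0..p}"
  and inj_\<beta>_upto: "q < mu ! 0 \<Longrightarrow> inj_on \<beta> {0..q}"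
  using inj_\<alpha> inj_\<beta> by (auto intro: inj_on_subset)

text \<open>Multiplying \<open>power_mat m\<close> by \<open>dd_mat\<close> replaces each power \<open>\<alpha>\<^sub>p\<^sup>a \<beta>\<^sub>q\<^sup>b\<close> by the product of the
  divided differences of \<open>t\<^sup>a\<close> at \<open>\<alpha>\<^sub>0, \<dots>, \<alpha>\<^sub>p\<close> and of \<open>t\<^sup>b\<close> at \<open>\<beta>\<^sub>0, \<dots>, \<beta>\<^sub>q\<close>; the sum over all
  cells \<open>(p', q') \<le> (p, q)\<close> needed for this stays inside \<open>\<mu>\<close> because \<open>\<mu>\<close> is a partition.\<close>
definition "dd_mat = mat N N (\<lambda>(l, j).
    if cell_row l \<le> cell_row j \<and> cell_col l \<le> cell_col j
    then dd_weight \<alpha> (cell_row l) (cell_row j) * dd_weight \<beta> (cell_col l) (cell_col j) else 0)"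

lemma power_mat_carrier: "power_mat m \<in> carrier_mat N N"
  and dd_mat_carrier: "dd_mat \<in> carrier_mat N N"
  by (simp_all add: power_mat_def dd_mat_def)

lemma det_dd_mat_nonzero: "det dd_mat \<noteq> 0"
proof -
  have "upper_triangular dd_mat"
    unfolding upper_triangular_def
  proof (intro allI impI)
    fix l j assume "l < dim_row dd_mat" "j < l"
    moreover from this have "cell_less (cells ! j) (cells ! l)"
      using sorted_wrt_nth_less[OF cells_sorted_wrt] length_cells by (simp add: dd_mat_def)
    ultimately show "dd_mat $$ (l, j) = 0"
      by (auto simp: dd_mat_def cell_less_def cell_row_def cell_col_def)
  qed
  then have "det dd_mat = prod_list (diag_mat dd_mat)"
    by (rule det_upper_triangular[OF _ dd_mat_carrier])
  moreover have "dd_weight \<alpha> p p \<noteq> 0" if "p < length mu" for p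
    using inj_\<alpha> that by (auto simp: dd_weight_def inj_on_def)
  moreover have "dd_weight \<beta> q q \<noteq> 0" if "q < mu ! 0" for q
    using inj_\<beta> that by (auto simp: dd_weight_def inj_on_def)
  ultimately show ?thesis
    using cell_row_bound cell_col_bound by (auto simp: diag_mat_def dd_mat_def prod_list_zero_iff)
qed

lemma power_mat_dd_mat_entry:
  assumes "i < N" "j < N"
  shows "(power_mat m * dd_mat) $$ (i, j) =
    divided_diff_power \<alpha> (xdeg m (Suc i)) (cell_row j) * divided_diff_power \<beta> (ydeg m (Suc i)) (cell_col j)"
proof -
  let ?a = "xdeg m (Suc i)" and ?b = "ydeg m (Suc i)" and ?p = "cell_row j" and ?q = "cell_col j"
  define h where "h c = (if fst c \<le> ?p \<and> snd c \<le> ?q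
    then (\<alpha> (fst c) ^ ?a * dd_weight \<alpha> (fst c) ?p) * (\<beta> (snd c) ^ ?b * dd_weight \<beta> (snd c) ?q)
    else 0)" for c
  have "(power_mat m * dd_mat) $$ (i, j) = (\<Sum>l<N. h (cells ! l))"
    using assms unfolding h_def
    by (auto simp: power_mat_def dd_mat_def scalar_prod_def cell_row_def cell_col_def atLeast0LessThan
        mult_ac intro!: sum.cong)
  also have "\<dots> = (\<Sum>c\<in>ferrers mu. h c)" by (rule sum_cells)
  also have "\<dots> = (\<Sum>c\<in>{0..?p} \<times> {0..?q}. h c)"
  proof (rule sum.mono_neutral_right[OF ferrers_finite])
    show "{0..?p} \<times> {0..?q} \<subseteq> ferrers mu"
      using ferrers_down_closed[OF partition cell_in_ferrers[OF assms(2)]] by auto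
  qed (auto simp: h_def)
  also have "\<dots> = divided_diff_power \<alpha> ?a ?p * divided_diff_power \<beta> ?b ?q"
    unfolding divided_diff_power_def sum_product sum.cartesian_product
    by (intro sum.cong refl) (auto simp: h_def)
  finally show ?thesis .
qed

lemma exponents_eq_if_dominating:
  assumes p: "p permutes {0..<N}" and m: "Poly_Mapping.keys m \<subseteq> qxy_vars N" "mdeg m \<le> delta_deg"
    and ge: "\<And>i. i < N \<Longrightarrow> cell_row (p i) \<le> xdeg m (Suc i) \<and> cell_col (p i) \<le> ydeg m (Suc i)"
  shows "\<forall>i<N. xdeg m (Suc i) = cell_row (p i) \<and> ydeg m (Suc i) = cell_col (p i)"
proof (rule ccontr)
  assume "\<not> ?thesis"
  then obtain i0 where i0: "i0 < N"
    "\<not> (xdeg m (Suc i0) = cell_row (p i0) \<and> ydeg m (Suc i0) = cell_col (p i0))" by blast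
  have "(\<Sum>i<N. cell_row (p i) + cell_col (p i)) < (\<Sum>i<N. xdeg m (Suc i) + ydeg m (Suc i))"
  proof (rule sum_strict_mono_ex1)
    show "\<forall>i\<in>{..<N}. cell_row (p i) + cell_col (p i) \<le> xdeg m (Suc i) + ydeg m (Suc i)"
      using ge by (simp add: add_mono)
    show "\<exists>i\<in>{..<N}. cell_row (p i) + cell_col (p i) < xdeg m (Suc i) + ydeg m (Suc i)"
      using ge[OF i0(1)] i0 by (intro bexI[of _ i0]) auto
  qed simp
  moreover have "(\<Sum>i<N. cell_row (p i) + cell_col (p i)) = delta_deg"
    using sum.reindex_bij_betw[OF permutes_imp_bij[OF p], of "\<lambda>t. cell_row t + cell_col t"]
    by (simp add: delta_deg_def atLeast0LessThan)
  ultimately show False using m mdeg_qxy by simp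
qed

text \<open>Each divided difference vanishes when the exponent is below the row (column) index, so a
  nonzero product forces the exponents to dominate the indices, hence to equal them.\<close>
lemma prod_power_mat_dd_mat:
  assumes p: "p permutes {0..<N}" and m: "Poly_Mapping.keys m \<subseteq> qxy_vars N" "mdeg m \<le> delta_deg"
  shows "(\<Prod>i<N. (power_mat m * dd_mat) $$ (i, p i)) =
    (if \<forall>i<N. xdeg m (Suc i) = cell_row (p i) \<and> ydeg m (Suc i) = cell_col (p i) then 1 else 0)"
proof -
  have p_less: "i < N \<Longrightarrow> p i < N" for i using p by (auto simp: permutes_in_image)
  let ?W = "\<lambda>i. divided_diff_power \<alpha> (xdeg m (Suc i)) (cell_row (p i)) *
                divided_diff_power \<beta> (ydeg m (Suc i)) (cell_col (p i))"
  have entries: "(\<Prod>i<N. (power_mat m * dd_mat) $$ (i, p i)) = (\<Prod>i<N. ?W i)"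
    by (intro prod.cong refl) (simp add: power_mat_dd_mat_entry p_less)
  show ?thesis
  proof (cases "\<forall>i<N. xdeg m (Suc i) = cell_row (p i) \<and> ydeg m (Suc i) = cell_col (p i)")
    case True
    then show ?thesis unfolding entries
      by (simp add: divided_diff_power_le inj_\<alpha>_upto inj_\<beta>_upto cell_row_bound cell_col_bound p_less)
  next
    case False
    have "(\<Prod>i<N. ?W i) = 0"
    proof (rule ccontr)
      assume "(\<Prod>i<N. ?W i) \<noteq> 0"
      then have "cell_row (p i) \<le> xdeg m (Suc i) \<and> cell_col (p i) \<le> ydeg m (Suc i)" if "i < N" for i
        using that by (auto intro!: divided_diff_power_nonzero_imp_le inj_\<alpha>_upto inj_\<beta>_upto
            cell_row_bound cell_col_bound p_less)
      with False show False using exponents_eq_if_dominating[OF p m] by blast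
    qed
    then show ?thesis unfolding entries if_not_P[OF False] .
  qed
qed

lemma det_power_mat_low_degree:
  assumes "Poly_Mapping.keys m \<subseteq> qxy_vars N" "mdeg m \<le> delta_deg"
  shows "det (power_mat m) * det dd_mat = Poly_Mapping.lookup (Delta (ferrers mu)) m"
proof -
  have "det (power_mat m) * det dd_mat = det (power_mat m * dd_mat)"
    by (rule det_mult[symmetric, OF power_mat_carrier dd_mat_carrier])
  also have "\<dots> = (\<Sum>p | p permutes {0..<N}. signof p * (\<Prod>i<N. (power_mat m * dd_mat) $$ (i, p i)))"
    using det_def'[OF mult_carrier_mat[OF power_mat_carrier dd_mat_carrier]]
    by (simp add: atLeast0LessThan)
  also have "\<dots> = Poly_Mapping.lookup (Delta (ferrers mu)) m"
    unfolding lookup_Delta_qxy[OF assms(1)]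
    by (intro sum.cong refl) (simp add: prod_power_mat_dd_mat assms)
  finally show ?thesis .
qed

definition "delta_fact_weight = (\<Prod>t<N. 1 / (fact (cell_row t) * fact (cell_col t)) :: rat)"

lemma alt_exp_low_degree:
  assumes "mdeg m \<le> delta_deg"
  shows "alt_exp m = delta_fact_weight / det dd_mat * Poly_Mapping.lookup (Delta (ferrers mu)) m"
proof (cases "Poly_Mapping.keys m \<subseteq> qxy_vars N")
  case False
  then have "Poly_Mapping.lookup (Delta (ferrers mu)) m = 0"
    unfolding lookup_Delta using keys_delta_mon by (intro sum.neutral) auto
  then show ?thesis using alt_exp_outside_qxy[OF False] by simp
next
  case True
  have "fact_weight m = delta_fact_weight" if nz: "Poly_Mapping.lookup (Delta (ferrers mu)) m \<noteq> 0"
  proof -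
    obtain \<sigma> where \<sigma>: "\<sigma> permutes {1..N}" "m = delta_mon \<sigma>"
      using Delta_coeff_nonzero_imp[OF nz] by blast
    then show ?thesis
      using prod.reindex_bij_betw[OF bij_betw_perm_index[OF \<sigma>(1)],
          of "\<lambda>t. 1 / (fact (cell_row t) * fact (cell_col t)) :: rat"]
      by (simp add: fact_weight_def delta_fact_weight_def xdeg_delta_mon ydeg_delta_mon
          prod.atLeast1_atMost_eq)
  qed
  then show ?thesis
    using alt_exp_qxy[OF True] det_power_mat_low_degree[OF True assms] det_dd_mat_nonzero
    by (cases "Poly_Mapping.lookup (Delta (ferrers mu)) m = 0") (auto simp: field_simps)
qed

section \<open>Shadow operators and fillings\<close>

text \<open>For \<open>cs = [(a\<^sub>0, b\<^sub>0), \<dots>]\<close> these are the factors of the operator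
  \<open>\<Prod>s. \<Prod>p<a\<^sub>s. (\<partial>x\<^sub>n\<^sub>+\<^sub>s\<^sub>+\<^sub>1 - \<alpha>\<^sub>p) * \<Prod>q<b\<^sub>s. (\<partial>y\<^sub>n\<^sub>+\<^sub>s\<^sub>+\<^sub>1 - \<beta>\<^sub>q)\<close>.\<close>
definition shadow_factors :: "(nat \<times> nat) list \<Rightarrow> (pvar \<times> rat) list" where
  "shadow_factors cs = concat (map (\<lambda>s.
      map (\<lambda>p. (X (n + s + 1), \<alpha> p)) [0..<fst (cs ! s)] @
      map (\<lambda>q. (Y (n + s + 1), \<beta> q)) [0..<snd (cs ! s)]) [0..<length cs])"

lemma lin_ops_mon_shadow_factors: "lin_ops_mon (shadow_factors cs) = shift_mono n cs"
proof -
  have rep: "lin_ops_mon (map (\<lambda>p. (v, c p)) [0..<a]) = Poly_Mapping.single v a" for v c a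
    by (induction a) (simp_all add: lin_ops_mon_def single_add[symmetric])
  have app: "lin_ops_mon (xs @ ys) = lin_ops_mon xs + lin_ops_mon ys" for xs ys
    by (simp add: lin_ops_mon_def)
  have "lin_ops_mon (concat xss) = (\<Sum>xs\<leftarrow>xss. lin_ops_mon xs)" for xss
    by (induction xss) (simp_all add: app)
  then have "lin_ops_mon (shadow_factors cs) = (\<Sum>s\<leftarrow>[0..<length cs].
      Poly_Mapping.single (X (n + s + 1)) (fst (cs ! s)) + Poly_Mapping.single (Y (n + s + 1)) (snd (cs ! s)))"
    by (simp add: shadow_factors_def app rep o_def)
  then show ?thesis
    by (simp add: shift_mono_def interv_sum_list_conv_sum_set_nat atLeast0LessThan)
qed

text \<open>The factor \<open>\<partial>x\<^sub>n\<^sub>+\<^sub>s\<^sub>+\<^sub>1 - \<alpha>\<^sub>p\<close> multiplies the exponential at \<open>perm_point \<sigma>\<close> by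
  \<open>\<alpha>\<^sub>r - \<alpha>\<^sub>p\<close>, where \<open>r\<close> is the row of the cell assigned to the variable \<open>n + s + 1\<close>; so the
  exponential survives only if that cell lies weakly south-east of \<open>cs ! s\<close>.\<close>
lemma shadow_factors_nonzero_imp:
  assumes "(\<Prod>(v, c)\<leftarrow>shadow_factors cs. perm_point \<sigma> v - c) \<noteq> 0" "length cs = k" "s < k"
  shows "fst (cs ! s) \<le> cell_row (\<sigma> (n + s + 1) - 1) \<and> snd (cs ! s) \<le> cell_col (\<sigma> (n + s + 1) - 1)"
proof -
  have nz: "perm_point \<sigma> v \<noteq> c" if "(v, c) \<in> set (shadow_factors cs)" for v c
  proof
    assume "perm_point \<sigma> v = c"
    then have "0 \<in> (\<lambda>(v, c). perm_point \<sigma> v - c) ` set (shadow_factors cs)" using that by force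
    then show False using assms(1) by (simp add: prod_list_zero_iff)
  qed
  have r: "perm_point \<sigma> (X (n + s + 1)) = \<alpha> (cell_row (\<sigma> (n + s + 1) - 1))"
    "perm_point \<sigma> (Y (n + s + 1)) = \<beta> (cell_col (\<sigma> (n + s + 1) - 1))"
    using assms(3) by (simp_all add: perm_point_def)
  show ?thesis
  proof (rule conjI; rule ccontr)
    assume "\<not> fst (cs ! s) \<le> cell_row (\<sigma> (n + s + 1) - 1)"
    then have "(X (n + s + 1), \<alpha> (cell_row (\<sigma> (n + s + 1) - 1))) \<in> set (shadow_factors cs)"
      using assms(2,3) unfolding shadow_factors_def by (auto intro!: bexI[of _ s])
    then show False using nz r(1) by blast
  next
    assume "\<not> snd (cs ! s) \<le> cell_col (\<sigma> (n + s + 1) - 1)"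
    then have "(Y (n + s + 1), \<beta> (cell_col (\<sigma> (n + s + 1) - 1))) \<in> set (shadow_factors cs)"
      using assms(2,3) unfolding shadow_factors_def by (auto intro!: bexI[of _ s])
    then show False using nz r(2) by blast
  qed
qed

lemma perm_restrict_filling:
  assumes \<sigma>: "\<sigma> permutes {1..N}"
    and shadow: "\<And>r. r \<in> {n+1..N} \<Longrightarrow> cells ! (\<sigma> r - 1) \<in> shadow mu i j"
  shows "\<exists>f\<in>fillings mu i j n k. \<forall>t\<in>{1..n}. f t = cells ! (\<sigma> t - 1)"
proof -
  define g where "g r = cells ! (\<sigma> r - 1)" for r
  have g: "bij_betw g {1..N} (ferrers mu)"
    unfolding g_def using bij_betw_trans[OF bij_betw_perm_index[OF \<sigma>] bij_betw_cells] by (simp add: o_def)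
  then have g_inj: "inj_on g {1..N}" by (rule bij_betw_imp_inj_on)
  define W where "W = g ` {n+1..N}"
  define f where "f t = (if t \<in> {1..n} then g t else undefined)" for t
  have "{1..N} = {1..n} \<union> {n+1..N}" "{1..n} \<inter> {n+1..N} = {}" by auto
  then have "g ` {1..n} = ferrers mu - W"
    using bij_betw_imp_surj_on[OF g] inj_on_image_Int[OF g_inj, of "{1..n}" "{n+1..N}"]
    by (auto simp: W_def)
  moreover have "bij_betw g {1..n} (g ` {1..n})"
    by (rule inj_on_imp_bij_betw) (auto intro: inj_on_subset[OF g_inj])
  moreover have "bij_betw f {1..n} (g ` {1..n}) = bij_betw g {1..n} (g ` {1..n})"
    by (rule bij_betw_cong) (simp add: f_def)
  ultimately have "bij_betw f {1..n} (ferrers mu - W)" by simp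
  moreover have "W \<subseteq> shadow mu i j" using shadow by (auto simp: W_def g_def)
  moreover have "card W = k"
    unfolding W_def by (subst card_image) (auto intro: inj_on_subset[OF g_inj])
  ultimately have "f \<in> fillings mu i j n k"
    unfolding fillings_def by (auto simp: f_def)
  moreover have "\<forall>t\<in>{1..n}. f t = cells ! (\<sigma> t - 1)" by (simp add: f_def g_def)
  ultimately show ?thesis by blast
qed

lemma lin_ops_alt_exp: "lin_ops L alt_exp = (\<lambda>m. \<Sum>\<sigma> | \<sigma> permutes {1..N}.
    (of_int (sign \<sigma>) * (\<Prod>(v, c)\<leftarrow>L. perm_point \<sigma> v - c)) * exp_series (perm_point \<sigma>) m)"
proof
  fix m
  have "alt_exp = (\<lambda>m. \<Sum>\<sigma> | \<sigma> permutes {1..N}. of_int (sign \<sigma>) * exp_series (perm_point \<sigma>) m)"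
    by (simp add: alt_exp_def fun_eq_iff)
  then show "lin_ops L alt_exp m = (\<Sum>\<sigma> | \<sigma> permutes {1..N}.
      (of_int (sign \<sigma>) * (\<Prod>(v, c)\<leftarrow>L. perm_point \<sigma> v - c)) * exp_series (perm_point \<sigma>) m)"
    by (simp add: lin_ops_linear finite_permutations lin_ops_exp_series mult_ac)
qed

lemma vanishing_kills_shadow_factors:
  assumes f: "f \<in> vanishing_ideal n (rho mu i j n k \<alpha> \<beta>)"
    and cs: "length cs = k" "set cs \<subseteq> shadow mu i j"
  shows "series_op f (lin_ops (shadow_factors cs) alt_exp) m = 0"
proof -
  have "eval f (perm_point \<sigma>) = 0"
    if \<sigma>: "\<sigma> permutes {1..N}" and nz: "(\<Prod>(v, c)\<leftarrow>shadow_factors cs. perm_point \<sigma> v - c) \<noteq> 0" for \<sigma>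
  proof -
    have "cells ! (\<sigma> r - 1) \<in> shadow mu i j" if r: "r \<in> {n+1..N}" for r
    proof -
      define s where "s = r - n - 1"
      have s: "s < k" "r = n + s + 1" and "r \<in> {1..N}" using r by (auto simp: s_def)
      then have "cs ! s \<in> shadow mu i j" using cs by auto
      moreover have "cells ! (\<sigma> r - 1) \<in> ferrers mu"
        using bij_betw_apply[OF bij_betw_cells] bij_betw_apply[OF bij_betw_perm_index[OF \<sigma>] \<open>r \<in> {1..N}\<close>]
        by auto
      ultimately show ?thesis
        using shadow_factors_nonzero_imp[OF nz cs(1) s(1)] s(2)
        by (auto simp: shadow_def cell_row_def cell_col_def)
    qed
    then obtain g where g: "g \<in> fillings mu i j n k" "\<forall>t\<in>{1..n}. g t = cells ! (\<sigma> t - 1)"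
      using perm_restrict_filling[OF \<sigma>] by blast
    have "eval f (perm_point \<sigma>) = eval f (point_of \<alpha> \<beta> n g)"
      using f g(2) by (intro eval_cong[of n])
        (auto simp: vanishing_ideal_def qxy_vars_def perm_point_def point_of_def cell_row_def cell_col_def)
    also have "\<dots> = 0" using f g(1) by (auto simp: vanishing_ideal_def rho_def)
    finally show ?thesis .
  qed
  then show ?thesis
    unfolding lin_ops_alt_exp
    by (subst series_op_linear[OF finite_permutations]) (auto intro!: sum.neutral simp: series_op_exp_series)
qed

lemma top_form_vanishing_kills:
  assumes "f \<in> vanishing_ideal n (rho mu i j n k \<alpha> \<beta>)" "length cs = k" "set cs \<subseteq> shadow mu i j"
  shows "series_op (top_form f) (Poly_Mapping.lookup (diff_mono (shift_mono n cs) (Delta (ferrers mu))))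
    = (\<lambda>_. 0)"
  unfolding lookup_diff_mono lin_ops_mon_shadow_factors[symmetric]
proof (rule series_op_top_form_kills[where F = alt_exp and K = delta_deg])
  fix m assume "mdeg m < delta_deg"
  moreover from this have "Poly_Mapping.lookup (Delta (ferrers mu)) m = 0"
    using mdeg_Delta_coeff by force
  ultimately show "alt_exp m = 0" by (simp add: alt_exp_low_degree)
next
  show "delta_fact_weight / det dd_mat \<noteq> 0"
    using det_dd_mat_nonzero by (simp add: delta_fact_weight_def)
qed (use alt_exp_low_degree mdeg_Delta_coeff vanishing_kills_shadow_factors[OF assms] in auto)

end

theorem mainTheorem5:
  fixes mu :: "nat list" and n k i j :: nat and \<alpha> \<beta> :: "nat \<Rightarrow> rat"
  assumes "is_partition mu (n + k)"
    and "(i, j) \<in> ferrers mu"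
    and "inj_on \<alpha> {0..<length mu}"
    and "inj_on \<beta> {0..<mu ! 0}"
  shows "gr_ideal n (vanishing_ideal n (rho mu i j n k \<alpha> \<beta>)) \<subseteq>
    {P. in_QXY n P \<and>
        (\<forall>cs. length cs = k \<and> set cs \<subseteq> shadow mu i j \<and> sorted_wrt cell_less cs \<longrightarrow>
              P \<in> I_of (diff_mono (shift_mono n cs) (Delta (ferrers mu))))}"
proof (intro subsetI CollectI conjI allI impI)
  interpret ferrers_points mu n k \<alpha> \<beta>
    using assms(1,3,4) by unfold_locales
  fix P assume P: "P \<in> gr_ideal n (vanishing_ideal n (rho mu i j n k \<alpha> \<beta>))"
  then show "in_QXY n P"
    by (rule in_QXY_gr_ideal) (simp add: vanishing_ideal_def)
  fix cs assume cs: "length cs = k \<and> set cs \<subseteq> shadow mu i j \<and> sorted_wrt cell_less cs"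
  show "P \<in> I_of (diff_mono (shift_mono n cs) (Delta (ferrers mu)))"
  proof (rule I_of_ideal_gen)
    show "P \<in> ideal_gen {p. in_QXY n p} (top_form ` vanishing_ideal n (rho mu i j n k \<alpha> \<beta>))"
      using P by (simp add: gr_ideal_def)
  qed (use cs top_form_vanishing_kills in blast)
qed

end
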